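(* For a generic real $6\times 6$ skew-Hamiltonian matrix $A$ (i.e. for $A$ outside a proper algebraic subset of the space of skew-Hamiltonian matrices), the real vector space of homogeneous polynomials $H$ of degree $3$ in $x_1,\dots,x_6$ satisfying the system of second-order PDEs $A\,\nabla^2H(x)=\nabla^2H(x)\,A^{\rm T}$ (for all $x\in\mathbb R^6$) has dimension $12$.
   Context: $J=\begin{pmatrix}0&I_3\\-I_3&0\end{pmatrix}$. A real $6\times6$ matrix $A$ is skew-Hamiltonian if $A^{\rm T}J=JA$; such matrices form a 15-dimensional vector space. $\nabla^2 H$ denotes the Hesse matrix of $H$. *)

theory Defs
  imports "HOL-Analysis.Analysis" "HOL-Library.Numeral_Type" "HOL-Library.Function_Algebras"
begin

text \<open>Indices of R^6 are the type 6 = {0,...,5}; we use to_nat-free descriptions via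
  the bijection with {0..<6} given by Rep_bit0.\<close>

definition idx :: "6 \<Rightarrow> nat" where "idx i = nat (Rep_bit0 i)"

text \<open>J = [[0, I3], [-I3, 0]] (rows/columns indexed 0..5).\<close>
definition Jmat :: "real^6^6" where
  "Jmat = (\<chi> i j. if idx i < 3 \<and> idx j = idx i + 3 then 1
                 else if 3 \<le> idx i \<and> idx i = idx j + 3 then -1 else 0)"

definition skew_hamiltonian :: "real^6^6 \<Rightarrow> bool" where
  "skew_hamiltonian A \<longleftrightarrow> transpose A ** Jmat = Jmat ** A"

definition partial :: "6 \<Rightarrow> (real^6 \<Rightarrow> real) \<Rightarrow> real^6 \<Rightarrow> real" where
  "partial i H x = deriv (\<lambda>t. H (x + t *\<^sub>R axis i 1)) 0"

definition hesse :: "(real^6 \<Rightarrow> real) \<Rightarrow> real^6 \<Rightarrow> real^6^6" where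
  "hesse H x = (\<chi> i j. partial i (partial j H) x)"

definition homog_cubic :: "(real^6 \<Rightarrow> real) \<Rightarrow> bool" where
  "homog_cubic H \<longleftrightarrow> (\<exists>c :: 6 \<Rightarrow> 6 \<Rightarrow> 6 \<Rightarrow> real.
      H = (\<lambda>x. \<Sum>i\<in>UNIV. \<Sum>j\<in>UNIV. \<Sum>k\<in>UNIV. c i j k * x$i * x$j * x$k))"

definition sol_space :: "real^6^6 \<Rightarrow> (real^6 \<Rightarrow> real) set" where
  "sol_space A = {H. homog_cubic H \<and> (\<forall>x. A ** hesse H x = hesse H x ** transpose A)}"

definition fun_dim :: "(real^6 \<Rightarrow> real) set \<Rightarrow> nat" where
  "fun_dim S = vector_space.dim (\<lambda>c f x. c * f x) S"

inductive matrix_poly :: "(real^6^6 \<Rightarrow> real) \<Rightarrow> bool" where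
  const: "matrix_poly (\<lambda>A. c)"
| entry: "matrix_poly (\<lambda>A. A $ i $ j)"
| add: "matrix_poly p \<Longrightarrow> matrix_poly q \<Longrightarrow> matrix_poly (\<lambda>A. p A + q A)"
| mult: "matrix_poly p \<Longrightarrow> matrix_poly q \<Longrightarrow> matrix_poly (\<lambda>A. p A * q A)"

end

theory Submission
  imports Defs
begin

text \<open>Write B = A^T and H(x) = T(x, x, x) with T symmetric. The condition
  A (Hesse H) = (Hesse H) A^T says exactly that B is self-adjoint for T between any two slots,
  T(B u, v, w) = T(u, B v, w). A skew-Hamiltonian A has characteristic polynomial q(t)^2 with
  q cubic, and q(A) = 0. Generically R^6 is spanned by the Krylov vectors B^r e_0, B^r e_3
  (r < 3); this is the polynomial condition det (krylov A) \<noteq> 0, which holds for one explicit A0.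
  Then T is determined by the numbers T(e_p, e_q, B^m e_u): they are symmetric in the three
  block indices p, q, u \<in> {0, 3} (4 choices) and satisfy the linear recurrence of q in m, so only
  m < 3 matters (3 choices). Each of these 12 choices is realised by a solution, and the
  realisations are independent.\<close>

lemma six_cases: fixes x :: 6 shows "x = 0 \<or> x = 1 \<or> x = 2 \<or> x = 3 \<or> x = 4 \<or> x = 5"
proof (induct x)
  case (of_int z)
  then have "z = 0 \<or> z = 1 \<or> z = 2 \<or> z = 3 \<or> z = 4 \<or> z = 5" by fastforce
  then show ?case by auto
qed

lemma UNIV_six: "(UNIV :: 6 set) = {0, 1, 2, 3, 4, 5}"
  using six_cases by auto

lemma sum_UNIV_six: "sum f (UNIV :: 6 set) = f 0 + f 1 + f 2 + f 3 + f 4 + f 5"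
  unfolding UNIV_six by (simp add: ac_simps)

lemma all_six: "(\<forall>i::6. P i) \<longleftrightarrow> P 0 \<and> P 1 \<and> P 2 \<and> P 3 \<and> P 4 \<and> P 5"
  by (metis six_cases)

lemma idx_six [simp]: "idx 0 = 0" "idx 1 = 1" "idx 2 = 2" "idx 3 = 3" "idx 4 = 4" "idx 5 = 5"
  by (simp_all add: idx_def bit0.Rep_numeral bit0.Rep_0 bit0.Rep_1)

text \<open>kidx p r is the index 3 p + r.\<close>

definition kidx :: "nat \<Rightarrow> nat \<Rightarrow> 6" where
  "kidx p r = (if p = 0 then (if r = 0 then 0 else if r = 1 then 1 else 2)
               else (if r = 0 then 3 else if r = 1 then 4 else 5))"

lemma less_two_cases: "p < (2::nat) \<Longrightarrow> p = 0 \<or> p = 1" by auto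
lemma less_three_cases: "p < (3::nat) \<Longrightarrow> p = 0 \<or> p = 1 \<or> p = 2" by auto
lemma less_four_cases: "p < (4::nat) \<Longrightarrow> p = 0 \<or> p = 1 \<or> p = 2 \<or> p = 3" by auto

lemma sum_less_two: "(\<Sum>p<2. f p) = f 0 + f (1::nat)"
  by (simp add: numeral_2_eq_2)
lemma sum_less_three: "(\<Sum>p<3. f p) = f 0 + f 1 + f (2::nat)"
  by (simp add: numeral_3_eq_3 numeral_2_eq_2)
lemma sum_less_four: "(\<Sum>p<4. f p) = f 0 + f 1 + f 2 + f (3::nat)"
  by (simp add: eval_nat_numeral)

lemma kidx_eq_iff:
  "p < 2 \<Longrightarrow> q < 2 \<Longrightarrow> r < 3 \<Longrightarrow> s < 3 \<Longrightarrow> kidx q s = kidx p r \<longleftrightarrow> q = p \<and> s = r"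
  by (auto dest!: less_two_cases less_three_cases simp: kidx_def)

lemma kidx_surj: "\<exists>p r. p < 2 \<and> r < 3 \<and> j = kidx p r"
proof -
  have "j = kidx 0 0 \<or> j = kidx 0 1 \<or> j = kidx 0 2 \<or> j = kidx 1 0 \<or> j = kidx 1 1 \<or> j = kidx 1 2"
    using six_cases[of j] by (simp add: kidx_def)
  then show ?thesis by (elim disjE) (intro exI conjI[rotated], assumption, simp, simp)+
qed

lemma sum_UNIV_kidx: "(\<Sum>j\<in>UNIV. f j) = (\<Sum>p<2. \<Sum>r<3. f (kidx p r))"
  by (simp add: sum_UNIV_six sum_less_two sum_less_three kidx_def add_ac)

lemma idx_kidx: "p < 2 \<Longrightarrow> r < 3 \<Longrightarrow> idx (kidx p r) div 3 = p \<and> idx (kidx p r) mod 3 = r"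
  by (auto dest!: less_two_cases less_three_cases simp: kidx_def)

section \<open>Skew-Hamiltonian matrices\<close>

lemma Jmat_nth: "Jmat $ i $ j = (if idx i < 3 \<and> idx j = idx i + 3 then 1
                 else if 3 \<le> idx i \<and> idx i = idx j + 3 then -1 else 0)"
  by (simp add: Jmat_def)

lemma skew_hamiltonian_nth:
  assumes "skew_hamiltonian A"
  shows "A$3$3 = A$0$0" "A$3$4 = A$1$0" "A$3$5 = A$2$0"
        "A$4$3 = A$0$1" "A$4$4 = A$1$1" "A$4$5 = A$2$1"
        "A$5$3 = A$0$2" "A$5$4 = A$1$2" "A$5$5 = A$2$2"
        "A$0$3 = 0" "A$1$4 = 0" "A$2$5 = 0"
        "A$1$3 = - A$0$4" "A$2$3 = - A$0$5" "A$2$4 = - A$1$5"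
        "A$3$0 = 0" "A$4$1 = 0" "A$5$2 = 0"
        "A$4$0 = - A$3$1" "A$5$0 = - A$3$2" "A$5$1 = - A$4$2"
proof -
  have E: "\<And>i j. (transpose A ** Jmat) $ i $ j = (Jmat ** A) $ i $ j"
    using assms unfolding skew_hamiltonian_def by simp
  note S = matrix_matrix_mult_def transpose_def Jmat_nth sum_UNIV_six
  show "A$3$3 = A$0$0" using E[of 0 3] by (simp add: S)
  show "A$3$4 = A$1$0" using E[of 0 4] by (simp add: S)
  show "A$3$5 = A$2$0" using E[of 0 5] by (simp add: S)
  show "A$4$3 = A$0$1" using E[of 1 3] by (simp add: S)
  show "A$4$4 = A$1$1" using E[of 1 4] by (simp add: S)
  show "A$4$5 = A$2$1" using E[of 1 5] by (simp add: S)
  show "A$5$3 = A$0$2" using E[of 2 3] by (simp add: S)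
  show "A$5$4 = A$1$2" using E[of 2 4] by (simp add: S)
  show "A$5$5 = A$2$2" using E[of 2 5] by (simp add: S)
  show "A$0$3 = 0" using E[of 3 3] by (simp add: S)
  show "A$1$4 = 0" using E[of 4 4] by (simp add: S)
  show "A$2$5 = 0" using E[of 5 5] by (simp add: S)
  show "A$1$3 = - A$0$4" using E[of 3 4] by (simp add: S)
  show "A$2$3 = - A$0$5" using E[of 3 5] by (simp add: S)
  show "A$2$4 = - A$1$5" using E[of 4 5] by (simp add: S)
  show "A$3$0 = 0" using E[of 0 0] by (simp add: S)
  show "A$4$1 = 0" using E[of 1 1] by (simp add: S)
  show "A$5$2 = 0" using E[of 2 2] by (simp add: S)
  show "A$4$0 = - A$3$1" using E[of 0 1] by (simp add: S)
  show "A$5$0 = - A$3$2" using E[of 0 2] by (simp add: S)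
  show "A$5$1 = - A$4$2" using E[of 1 2] by (simp add: S)
qed

text \<open>A skew-Hamiltonian matrix has the form [[M, N], [K, M^T]] with N, K skew-symmetric; its
  characteristic polynomial is the square of a cubic, and A is annihilated by that cubic
  t^3 - esym1 A t^2 + esym2 A t - esym3 A.\<close>

definition esym1 :: "real^6^6 \<Rightarrow> real" where "esym1 A = A$0$0 + A$1$1 + A$2$2"

definition esym2 :: "real^6^6 \<Rightarrow> real" where
  "esym2 A = A$0$4*A$3$1 + A$0$5*A$3$2 + A$1$5*A$4$2
    + A$0$0*A$1$1 + A$0$0*A$2$2 - A$0$1*A$1$0 - A$0$2*A$2$0 + A$1$1*A$2$2 - A$1$2*A$2$1"

definition esym3 :: "real^6^6 \<Rightarrow> real" where
  "esym3 A = A$0$4*A$3$1*A$2$2 - A$0$4*A$3$2*A$2$1 + A$0$4*A$4$2*A$2$0 - A$0$5*A$3$1*A$1$2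
    + A$0$5*A$3$2*A$1$1 - A$0$5*A$4$2*A$1$0 + A$1$5*A$3$1*A$0$2 - A$1$5*A$3$2*A$0$1
    + A$1$5*A$4$2*A$0$0 + A$0$0*A$1$1*A$2$2 - A$0$0*A$1$2*A$2$1 - A$0$1*A$1$0*A$2$2
    + A$0$1*A$1$2*A$2$0 + A$0$2*A$1$0*A$2$1 - A$0$2*A$1$1*A$2$0"

lemma skew_hamiltonian_cubic:
  assumes "skew_hamiltonian A"
  shows "A ** A ** A = esym1 A *\<^sub>R (A ** A) - esym2 A *\<^sub>R A + esym3 A *\<^sub>R mat 1"
  using skew_hamiltonian_nth[OF assms] unfolding vec_eq_iff all_six
  by (simp add: matrix_matrix_mult_def mat_def sum_UNIV_six esym1_def esym2_def esym3_def algebra_simps)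

definition vmul :: "real^'n^'n \<Rightarrow> real^'n \<Rightarrow> real^'n" where "vmul A u = u v* A"

lemma vmul_nth: "vmul A u $ l = (\<Sum>i\<in>UNIV. A$i$l * u$i)"
  by (simp add: vmul_def vector_matrix_mult_def mult.commute)

lemma linear_vmul: "linear (vmul A)"
  using matrix_vector_mul_linear[of "transpose A"] by (simp add: vmul_def[abs_def])

lemma vmul_pow_add: "(vmul A ^^ (m + n)) u = (vmul A ^^ m) ((vmul A ^^ n) u)"
  by (simp add: funpow_add)

lemma funpow_transfer:
  assumes "\<And>a b. P (f a) b = P a (g b)"
  shows "P ((f ^^ n) a) b = P a ((g ^^ n) b)"
proof (induction n arbitrary: b)
  case (Suc n)
  have "P ((f ^^ Suc n) a) b = P ((f ^^ n) a) (g b)" by (simp add: assms)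
  also have "\<dots> = P a ((g ^^ Suc n) b)" by (simp add: Suc funpow_swap1)
  finally show ?case .
qed simp

lemma vmul_pow_three:
  assumes "skew_hamiltonian A"
  shows "(vmul A ^^ 3) u = esym3 A *\<^sub>R u + (- esym2 A) *\<^sub>R vmul A u + esym1 A *\<^sub>R (vmul A ^^ 2) u"
proof -
  have "(vmul A ^^ 3) u = u v* (A ** A ** A)"
    by (simp add: vmul_def vector_matrix_mul_assoc eval_nat_numeral)
  also have "\<dots> = esym1 A *\<^sub>R (u v* (A ** A)) - esym2 A *\<^sub>R (u v* A) + esym3 A *\<^sub>R u"
    by (simp add: skew_hamiltonian_cubic[OF assms] vector_matrix_mult_add_rdistrib
        vector_matrix_mult_diff_rdistrib vector_scaleR_matrix_ac)
  also have "\<dots> = esym3 A *\<^sub>R u + (- esym2 A) *\<^sub>R vmul A u + esym1 A *\<^sub>R (vmul A ^^ 2) u"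
    by (simp add: vmul_def vector_matrix_mul_assoc eval_nat_numeral algebra_simps)
  finally show ?thesis .
qed

lemma sum_rotate3: "(\<Sum>a\<in>A. \<Sum>b\<in>B. \<Sum>c\<in>C. f a b c) = (\<Sum>c\<in>C. \<Sum>a\<in>A. \<Sum>b\<in>B. f a b c)"
proof -
  have "(\<Sum>a\<in>A. \<Sum>b\<in>B. \<Sum>c\<in>C. f a b c) = (\<Sum>a\<in>A. \<Sum>c\<in>C. \<Sum>b\<in>B. f a b c)"
    by (intro sum.cong refl sum.swap)
  also have "\<dots> = (\<Sum>c\<in>C. \<Sum>a\<in>A. \<Sum>b\<in>B. f a b c)"
    by (rule sum.swap)
  finally show ?thesis .
qed

definition trilinear :: "('n \<Rightarrow> 'n \<Rightarrow> 'n \<Rightarrow> real) \<Rightarrow> real^'n \<Rightarrow> real^'n \<Rightarrow> real^'n \<Rightarrow> real" where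
  "trilinear c u v w = (\<Sum>i\<in>UNIV. \<Sum>j\<in>UNIV. \<Sum>k\<in>UNIV. c i j k * u$i * v$j * w$k)"

lemma linear_trilinear:
  "linear (\<lambda>u. trilinear c u v w)" "linear (\<lambda>v. trilinear c u v w)" "linear (\<lambda>w. trilinear c u v w)"
  by (auto intro!: linearI simp: trilinear_def sum.distrib[symmetric] sum_distrib_left algebra_simps)

lemmas trilinear_add = linear_trilinear[THEN linear_add]
lemmas trilinear_diff = linear_trilinear[THEN linear_diff]
lemmas trilinear_scaleR = linear_trilinear[THEN linear_scale]
lemmas trilinear_sum = linear_trilinear[THEN linear_sum]

lemma trilinear_tensor_sum: "trilinear (\<lambda>i j k. \<Sum>r\<in>R. f r i j k) u v w = (\<Sum>r\<in>R. trilinear (f r) u v w)"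
proof -
  have "trilinear (\<lambda>i j k. \<Sum>r\<in>R. f r i j k) u v w =
      (\<Sum>i\<in>UNIV. \<Sum>j\<in>UNIV. \<Sum>r\<in>R. \<Sum>k\<in>UNIV. f r i j k * u$i * v$j * w$k)"
    by (simp add: trilinear_def sum_distrib_right sum.swap[where B = R])
  also have "\<dots> = (\<Sum>r\<in>R. trilinear (f r) u v w)"
    by (simp add: trilinear_def sum.swap[where B = R])
  finally show ?thesis .
qed

lemma trilinear_tensor_scale: "trilinear (\<lambda>i j k. a * c i j k) u v w = a * trilinear c u v w"
  by (simp add: trilinear_def sum_distrib_left mult_ac)

lemma trilinear_tensor_add:
  "trilinear (\<lambda>i j k. c i j k + d i j k) u v w = trilinear c u v w + trilinear d u v w"
  by (simp add: trilinear_def sum.distrib[symmetric] algebra_simps)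

lemma trilinear_swap12: "trilinear (\<lambda>i j k. c j i k) u v w = trilinear c v u w"
  unfolding trilinear_def by (subst sum.swap) (simp add: mult_ac)

lemma trilinear_swap23: "trilinear (\<lambda>i j k. c i k j) u v w = trilinear c u w v"
  unfolding trilinear_def by (rule sum.cong[OF refl], subst sum.swap) (simp add: mult_ac)

definition symmetrize :: "('n \<Rightarrow> 'n \<Rightarrow> 'n \<Rightarrow> real) \<Rightarrow> 'n \<Rightarrow> 'n \<Rightarrow> 'n \<Rightarrow> real" where
  "symmetrize c i j k = c i j k + c i k j + c j i k + c j k i + c k i j + c k j i"

lemma trilinear_symmetrize:
  "trilinear (symmetrize c) u v w =
     trilinear c u v w + trilinear c u w v + trilinear c v u w
   + trilinear c v w u + trilinear c w u v + trilinear c w v u"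
proof -
  have 231: "trilinear (\<lambda>i j k. c j k i) u v w = trilinear c v w u"
    using trilinear_swap12[of "\<lambda>i j k. c i k j" u v w] by (simp only: trilinear_swap23[of c])
  have 312: "\<And>u v w. trilinear (\<lambda>i j k. c k i j) u v w = trilinear c w u v"
    using trilinear_swap23[of "\<lambda>i j k. c j i k"] by (simp only: trilinear_swap12[of c])
  have 321: "trilinear (\<lambda>i j k. c k j i) u v w = trilinear c w v u"
    using trilinear_swap12[of "\<lambda>i j k. c k i j" u v w] 312[of v u w] by (simp only:)
  show ?thesis
    by (simp only: symmetrize_def[abs_def] trilinear_tensor_add trilinear_swap12[of c]
        trilinear_swap23[of c] 231 312 321)
qed

lemma symmetrize_sum:
  "symmetrize (\<lambda>i j k. \<Sum>x\<in>X. c x i j k) i j k = (\<Sum>x\<in>X. symmetrize (c x) i j k)"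
  by (simp add: symmetrize_def sum.distrib)

lemma symmetrize_scale: "symmetrize (\<lambda>i j k. a * c i j k) i j k = a * symmetrize c i j k"
  by (simp add: symmetrize_def distrib_left)

lemma trilinear_symmetrize_commute:
  "trilinear (symmetrize c) u v w = trilinear (symmetrize c) v u w"
  "trilinear (symmetrize c) u v w = trilinear (symmetrize c) u w v"
  unfolding trilinear_symmetrize by linarith+

lemma sum_axis: "(\<Sum>k\<in>UNIV. f k * axis i (1::real) $ k) = f i"
  by (simp add: axis_def if_distrib[of "(*) _"] cong: if_cong)

lemma trilinear_axis: "trilinear c (axis i 1) (axis j 1) w = (\<Sum>k\<in>UNIV. c i j k * w$k)"
proof -
  have "\<And>i' j'. (\<Sum>k\<in>UNIV. c i' j' k * axis i 1 $ i' * axis j (1::real) $ j' * w$k) =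
      (if j' = j then if i' = i then (\<Sum>k\<in>UNIV. c i j k * w$k) else 0 else 0)"
    by (simp add: axis_def)
  then show ?thesis
    unfolding trilinear_def by (simp add: sum.delta)
qed

lemma trilinear_axis_axis_axis: "trilinear c (axis i 1) (axis j 1) (axis k 1) = c i j k"
  by (simp add: trilinear_axis sum_axis)

lemma trilinear_vmul1:
  "trilinear s (vmul A u) v w = trilinear (\<lambda>i j k. \<Sum>l\<in>UNIV. A$i$l * s l j k) u v w"
proof -
  have "trilinear s (vmul A u) v w =
      (\<Sum>l\<in>UNIV. \<Sum>j\<in>UNIV. \<Sum>k\<in>UNIV. \<Sum>i\<in>UNIV. A$i$l * s l j k * u$i * v$j * w$k)"
    by (simp add: trilinear_def vmul_nth sum_distrib_left sum_distrib_right mult_ac)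
  also have "\<dots> = (\<Sum>l\<in>UNIV. \<Sum>i\<in>UNIV. \<Sum>j\<in>UNIV. \<Sum>k\<in>UNIV. A$i$l * s l j k * u$i * v$j * w$k)"
    by (rule sum.cong[OF refl], rule sum_rotate3)
  also have "\<dots> = (\<Sum>i\<in>UNIV. \<Sum>l\<in>UNIV. \<Sum>j\<in>UNIV. \<Sum>k\<in>UNIV. A$i$l * s l j k * u$i * v$j * w$k)"
    by (rule sum.swap)
  also have "\<dots> = (\<Sum>i\<in>UNIV. \<Sum>j\<in>UNIV. \<Sum>k\<in>UNIV. \<Sum>l\<in>UNIV. A$i$l * s l j k * u$i * v$j * w$k)"
    by (rule sum.cong[OF refl], rule sum_rotate3[symmetric])
  also have "\<dots> = trilinear (\<lambda>i j k. \<Sum>l\<in>UNIV. A$i$l * s l j k) u v w"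
    by (simp add: trilinear_def sum_distrib_right)
  finally show ?thesis .
qed

lemma trilinear_vmul2:
  "trilinear s u (vmul A v) w = trilinear (\<lambda>i j k. \<Sum>l\<in>UNIV. A$j$l * s i l k) u v w"
  using trilinear_vmul1[of "\<lambda>i j k. s j i k" A v u w]
  by (simp only: trilinear_swap12[of s] trilinear_swap12[of "\<lambda>i j k. \<Sum>l\<in>UNIV. A$i$l * s j l k"])

lemma trilinear_change_basis:
  fixes M :: "real^'m^'n"
  shows "trilinear s (M *v a) (M *v b) (M *v d) =
    trilinear (\<lambda>i j k. trilinear s (column i M) (column j M) (column k M)) a b d"
  by (simp add: matrix_mult_sum scalar_mult_eq_scaleR trilinear_sum trilinear_scaleR
      trilinear_def[of "\<lambda>i j k. trilinear s (column i M) (column j M) (column k M)"]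
      sum_distrib_left mult_ac)
    (subst sum_rotate3, rule sum.cong[OF refl], rule sum.swap)

lemma trilinear_axis_tensor:
  "trilinear (\<lambda>i j k. axis a 1 $ i * axis b 1 $ j * axis d 1 $ k) u v w = u$a * v$b * w$d"
proof -
  have "trilinear (\<lambda>i j k. axis a 1 $ i * axis b 1 $ j * axis d 1 $ k) u v w =
      (\<Sum>i\<in>UNIV. u$i * axis a 1 $ i) * (\<Sum>j\<in>UNIV. v$j * axis b 1 $ j) * (\<Sum>k\<in>UNIV. w$k * axis d 1 $ k)"
    by (simp add: trilinear_def sum_distrib_left sum_distrib_right mult_ac) (rule sum.swap)
  then show ?thesis by (simp only: sum_axis)
qed

section \<open>The Hesse condition for cubic forms\<close>

lemma deriv_cubic_at_0: "deriv (\<lambda>t::real. a + t * b + t^2 * c + t^3 * d) 0 = b"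
  by (rule DERIV_imp_deriv) (auto intro!: derivative_eq_intros)

lemma deriv_quadratic_at_0: "deriv (\<lambda>t::real. a + t * b + t^2 * c) 0 = b"
  by (rule DERIV_imp_deriv) (auto intro!: derivative_eq_intros)

lemma partial_cubic_form:
  "partial j (\<lambda>x. trilinear c x x x) y =
     trilinear c (axis j 1) y y + trilinear c y (axis j 1) y + trilinear c y y (axis j 1)"
proof -
  let ?e = "axis j 1 :: real^6"
  have "(\<lambda>t. trilinear c (y + t *\<^sub>R ?e) (y + t *\<^sub>R ?e) (y + t *\<^sub>R ?e)) =
    (\<lambda>t. trilinear c y y y + t * (trilinear c ?e y y + trilinear c y ?e y + trilinear c y y ?e)
      + t^2 * (trilinear c ?e ?e y + trilinear c ?e y ?e + trilinear c y ?e ?e) + t^3 * trilinear c ?e ?e ?e)"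
    by (simp add: trilinear_add trilinear_scaleR fun_eq_iff algebra_simps power2_eq_square power3_eq_cube)
  then show ?thesis
    unfolding partial_def by (simp only: deriv_cubic_at_0)
qed

lemma hesse_cubic_form:
  "hesse (\<lambda>x. trilinear c x x x) x $ i $ j = (\<Sum>k\<in>UNIV. symmetrize c i j k * x$k)"
proof -
  let ?a = "axis i 1 :: real^6" and ?b = "axis j 1 :: real^6"
  have "hesse (\<lambda>x. trilinear c x x x) x $ i $ j =
      deriv (\<lambda>t. trilinear c ?b (x + t *\<^sub>R ?a) (x + t *\<^sub>R ?a) + trilinear c (x + t *\<^sub>R ?a) ?b (x + t *\<^sub>R ?a)
          + trilinear c (x + t *\<^sub>R ?a) (x + t *\<^sub>R ?a) ?b) 0"
    by (simp add: hesse_def partial_def[of i] partial_cubic_form)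
  also have "(\<lambda>t. trilinear c ?b (x + t *\<^sub>R ?a) (x + t *\<^sub>R ?a) + trilinear c (x + t *\<^sub>R ?a) ?b (x + t *\<^sub>R ?a)
          + trilinear c (x + t *\<^sub>R ?a) (x + t *\<^sub>R ?a) ?b) =
    (\<lambda>t. (trilinear c ?b x x + trilinear c x ?b x + trilinear c x x ?b)
      + t * (trilinear c ?b ?a x + trilinear c ?b x ?a + trilinear c ?a ?b x
           + trilinear c x ?b ?a + trilinear c ?a x ?b + trilinear c x ?a ?b)
      + t^2 * (trilinear c ?b ?a ?a + trilinear c ?a ?b ?a + trilinear c ?a ?a ?b))"
    by (simp add: trilinear_add trilinear_scaleR fun_eq_iff algebra_simps power2_eq_square)
  also have "deriv \<dots> 0 = trilinear (symmetrize c) ?a ?b x"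
    unfolding deriv_quadratic_at_0 trilinear_symmetrize by linarith
  finally show ?thesis by (simp add: trilinear_axis)
qed

definition self_adjoint_for :: "('n \<Rightarrow> 'n \<Rightarrow> 'n \<Rightarrow> real) \<Rightarrow> real^'n^'n \<Rightarrow> bool" where
  "self_adjoint_for s A \<longleftrightarrow> (\<forall>u v w. trilinear s (vmul A u) v w = trilinear s u (vmul A v) w)"

lemma self_adjoint_for_iff_nth:
  "self_adjoint_for s A \<longleftrightarrow> (\<forall>i j k. (\<Sum>l\<in>UNIV. A$i$l * s l j k) = (\<Sum>l\<in>UNIV. A$j$l * s i l k))"
proof
  assume "self_adjoint_for s A"
  then have "trilinear s (vmul A (axis i 1)) (axis j 1) (axis k 1) =
      trilinear s (axis i 1) (vmul A (axis j 1)) (axis k 1)" for i j k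
    unfolding self_adjoint_for_def by blast
  then show "\<forall>i j k. (\<Sum>l\<in>UNIV. A$i$l * s l j k) = (\<Sum>l\<in>UNIV. A$j$l * s i l k)"
    unfolding trilinear_vmul1 trilinear_vmul2 trilinear_axis_axis_axis by blast
qed (simp add: self_adjoint_for_def trilinear_vmul1 trilinear_vmul2)

lemma hesse_commute_iff:
  "(\<forall>x. A ** hesse (\<lambda>x. trilinear c x x x) x = hesse (\<lambda>x. trilinear c x x x) x ** transpose A)
     \<longleftrightarrow> self_adjoint_for (symmetrize c) A"
proof -
  let ?s = "symmetrize c"
  have entries: "(A ** hesse (\<lambda>x. trilinear c x x x) x) $ i $ j =
      (\<Sum>k\<in>UNIV. (\<Sum>l\<in>UNIV. A$i$l * ?s l j k) * x$k)"
    "(hesse (\<lambda>x. trilinear c x x x) x ** transpose A) $ i $ j =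
      (\<Sum>k\<in>UNIV. (\<Sum>l\<in>UNIV. A$j$l * ?s i l k) * x$k)" for x i j
    unfolding matrix_matrix_mult_def hesse_cubic_form transpose_def vec_lambda_beta
      sum_distrib_left sum_distrib_right
    by (subst sum.swap, simp add: mult_ac)+
  show ?thesis
    unfolding self_adjoint_for_iff_nth vec_eq_iff entries
  proof (intro iffI allI)
    fix i j k
    assume "\<forall>x i j. (\<Sum>k\<in>UNIV. (\<Sum>l\<in>UNIV. A$i$l * ?s l j k) * x$k) =
                    (\<Sum>k\<in>UNIV. (\<Sum>l\<in>UNIV. A$j$l * ?s i l k) * x$k)"
    from this[THEN spec[of _ "axis k 1"], THEN spec[of _ i], THEN spec[of _ j]]
    show "(\<Sum>l\<in>UNIV. A$i$l * ?s l j k) = (\<Sum>l\<in>UNIV. A$j$l * ?s i l k)"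
      by (simp only: sum_axis)
  qed simp
qed

lemma sol_space_iff:
  "H \<in> sol_space A \<longleftrightarrow> (\<exists>c. H = (\<lambda>x. trilinear c x x x) \<and> self_adjoint_for (symmetrize c) A)"
  unfolding sol_space_def homog_cubic_def trilinear_def[symmetric] using hesse_commute_iff by auto

lemma self_adjoint_for_symmetrize_pow:
  assumes "self_adjoint_for (symmetrize c) A"
  shows "trilinear (symmetrize c) ((vmul A ^^ r) x) ((vmul A ^^ s) y) ((vmul A ^^ t) z) =
    trilinear (symmetrize c) x y ((vmul A ^^ (r + s + t)) z)"
proof -
  let ?T = "trilinear (symmetrize c)"
  have first: "?T (vmul A x) y z = ?T x y (vmul A z)" for x y z
    using assms unfolding self_adjoint_for_def by (metis trilinear_symmetrize_commute(2))
  have second: "?T x (vmul A y) z = ?T x y (vmul A z)" for x y z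
    using first by (metis trilinear_symmetrize_commute(1))
  have "?T ((vmul A ^^ r) x) ((vmul A ^^ s) y) ((vmul A ^^ t) z) =
      ?T x ((vmul A ^^ s) y) ((vmul A ^^ r) ((vmul A ^^ t) z))"
    using funpow_transfer[where P = "\<lambda>x z. ?T x ((vmul A ^^ s) y) z"] first by blast
  also have "\<dots> = ?T x y ((vmul A ^^ s) ((vmul A ^^ r) ((vmul A ^^ t) z)))"
    using funpow_transfer[where P = "\<lambda>y z. ?T x y z"] second by blast
  also have "\<dots> = ?T x y ((vmul A ^^ (r + s + t)) z)"
    by (metis vmul_pow_add add.commute)
  finally show ?thesis .
qed

lemma symmetrize_eq_0_if_cubic_form_eq_0:
  fixes c :: "6 \<Rightarrow> 6 \<Rightarrow> 6 \<Rightarrow> real"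
  assumes "\<And>x. trilinear c x x x = 0"
  shows "symmetrize c i j k = 0"
proof -
  have "(\<lambda>x. trilinear c x x x) = (\<lambda>x. trilinear (\<lambda>_ _ _. 0) x x x)"
    using assms by (simp add: fun_eq_iff trilinear_def)
  then have "hesse (\<lambda>x. trilinear c x x x) (axis k 1) $ i $ j = hesse (\<lambda>x. trilinear (\<lambda>_ _ _. 0) x x x) (axis k 1) $ i $ j"
    by simp
  then show ?thesis
    by (simp add: hesse_cubic_form sum_axis symmetrize_def)
qed

text \<open>rcoeff a0 a1 a2 n m is the coefficient of t^n in the remainder of t^m modulo
  t^3 - a2 t^2 - a1 t - a0.\<close>

fun rcoeff :: "real \<Rightarrow> real \<Rightarrow> real \<Rightarrow> nat \<Rightarrow> nat \<Rightarrow> real" where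
  "rcoeff a0 a1 a2 n 0 = (if n = 0 then 1 else 0)"
| "rcoeff a0 a1 a2 n (Suc 0) = (if n = 1 then 1 else 0)"
| "rcoeff a0 a1 a2 n (Suc (Suc 0)) = (if n = 2 then 1 else 0)"
| "rcoeff a0 a1 a2 n (Suc (Suc (Suc m))) =
     a0 * rcoeff a0 a1 a2 n m + a1 * rcoeff a0 a1 a2 n (Suc m) + a2 * rcoeff a0 a1 a2 n (Suc (Suc m))"

lemma rcoeff_less_three: "m < 3 \<Longrightarrow> rcoeff a0 a1 a2 n m = (if n = m then 1 else 0)"
  by (auto dest!: less_three_cases simp: numeral_2_eq_2)

lemma rcoeff_add_three:
  "rcoeff a0 a1 a2 n (m + 3) = a0 * rcoeff a0 a1 a2 n m + a1 * rcoeff a0 a1 a2 n (m + 1) + a2 * rcoeff a0 a1 a2 n (m + 2)"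
  by (simp add: numeral_3_eq_3 numeral_2_eq_2)

lemma linear_recurrence_expand:
  fixes F :: "nat \<Rightarrow> real"
  assumes rec: "\<And>m. F (m + 3) = a0 * F m + a1 * F (m + 1) + a2 * F (m + 2)"
  shows "F m = (\<Sum>n<3. rcoeff a0 a1 a2 n m * F n)"
proof (induction m rule: less_induct)
  case (less m)
  show ?case
  proof (cases "m < 3")
    case True
    then show ?thesis by (auto dest!: less_three_cases simp: sum_less_three rcoeff_less_three)
  next
    case False
    then obtain k where m: "m = k + 3" by (metis add.commute le_add_diff_inverse2 not_less)
    have "F m = a0 * F k + a1 * F (k + 1) + a2 * F (k + 2)"
      by (simp add: m rec)
    also have "\<dots> = (\<Sum>n<3. rcoeff a0 a1 a2 n m * F n)"
      using less[of k] less[of "k + 1"] less[of "k + 2"]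
      by (simp add: m rcoeff_add_three sum_less_three algebra_simps)
    finally show ?thesis .
  qed
qed

lemma triple_sum_shift:
  fixes G :: "nat \<Rightarrow> real"
  assumes "\<And>m. (\<Sum>r<3. G (r + m) * a' r) = (\<Sum>r<3. G (r + m + 1) * a r)"
  shows "(\<Sum>r<3. \<Sum>s<3. \<Sum>t<3. G (r + s + t) * a' r * b s * c t) =
    (\<Sum>r<3. \<Sum>s<3. \<Sum>t<3. G (r + s + t + 1) * a r * b s * c t)"
proof -
  have regroup: "(\<Sum>r<3. \<Sum>s<3. \<Sum>t<3. F (r + s + t) * a r * b s * c t) =
      (\<Sum>s<3. \<Sum>t<3. (\<Sum>r<3. F (r + (s + t)) * a r) * b s * c t)" for F :: "nat \<Rightarrow> real" and a
    by (subst sum_rotate3, subst sum_rotate3) (simp add: sum_distrib_right add.assoc)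
  show ?thesis
    using regroup[of G a'] regroup[of "\<lambda>m. G (m + 1)" a] by (simp add: assms add.assoc)
qed

lemma triple_sum_swap12:
  fixes G :: "nat \<Rightarrow> real"
  shows "(\<Sum>r<3. \<Sum>s<3. \<Sum>t<3. G (r + s + t) * a r * b s * c t) =
    (\<Sum>r<3. \<Sum>s<3. \<Sum>t<3. G (r + s + t) * b r * a s * (c t :: real))"
  by (subst sum.swap) (simp add: add_ac mult_ac)

lemma triple_sum_swap23:
  fixes G :: "nat \<Rightarrow> real"
  shows "(\<Sum>r<3. \<Sum>s<3. \<Sum>t<3. G (r + s + t) * a r * b s * c t) =
    (\<Sum>r<3. \<Sum>s<3. \<Sum>t<3. G (r + s + t) * a r * c s * (b t :: real))"
  by (rule sum.cong[OF refl], subst sum.swap) (simp add: add_ac mult_ac)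

definition krylov_seed :: "nat \<Rightarrow> real^6" where
  "krylov_seed p = (if p = 0 then axis 0 1 else axis 3 1)"

definition kvec :: "real^6^6 \<Rightarrow> nat \<Rightarrow> nat \<Rightarrow> real^6" where
  "kvec A p r = (vmul A ^^ r) (krylov_seed p)"

lemma kvec_Suc: "kvec A p (Suc r) = vmul A (kvec A p r)"
  by (simp add: kvec_def)

lemma kvec_add_three:
  assumes "skew_hamiltonian A"
  shows "kvec A p (m + 3) = esym3 A *\<^sub>R kvec A p m + (- esym2 A) *\<^sub>R kvec A p (m + 1) + esym1 A *\<^sub>R kvec A p (m + 2)"
proof -
  have shift: "kvec A p (m + j) = (vmul A ^^ j) (kvec A p m)" for j
    by (simp add: kvec_def add.commute[of m j] funpow_add)
  show ?thesis
    unfolding shift using vmul_pow_three[OF assms] by simp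
qed

text \<open>The columns of krylov A are u, A^T u, (A^T)^2 u for u = e_0 and u = e_3.\<close>

definition krylov :: "real^6^6 \<Rightarrow> real^6^6" where
  "krylov A = (\<chi> i j. kvec A (idx j div 3) (idx j mod 3) $ i)"

lemma column_krylov: "p < 2 \<Longrightarrow> r < 3 \<Longrightarrow> column (kidx p r) (krylov A) = kvec A p r"
  by (simp add: column_def krylov_def idx_kidx vec_eq_iff)

lemma matrix_inv_mult:
  assumes "invertible A"
  shows "A ** matrix_inv A = mat 1" "matrix_inv A ** A = mat 1"
  using someI_ex[OF assms[unfolded invertible_def]] unfolding matrix_inv_def by blast+

lemma sum_apply: "(\<Sum>i\<in>S. f i) x = (\<Sum>i\<in>S. f i x)"
  by (induct S rule: infinite_finite_induct) simp_all

lemma vector_space_fun: "vector_space (\<lambda>(c::real) (f::'a \<Rightarrow> real) x. c * f x)"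
  by unfold_locales (simp_all add: fun_eq_iff algebra_simps)

lemma (in vector_space) independent_image_if_scalars_zero:
  assumes fin: "finite I"
    and zero: "\<And>\<beta> i. (\<Sum>j\<in>I. scale (\<beta> j) (b j)) = 0 \<Longrightarrow> i \<in> I \<Longrightarrow> \<beta> i = 0"
  shows "inj_on b I" and "independent (b ` I)"
proof -
  show inj: "inj_on b I"
  proof (rule inj_onI, rule ccontr)
    fix i j assume i: "i \<in> I" and j: "j \<in> I" and eq: "b i = b j" and "i \<noteq> j"
    define \<beta> where "\<beta> l = (if l = i then 1 else 0) - (if l = j then 1 else (0::'a))" for l
    have "(\<Sum>l\<in>I. scale (\<beta> l) (b l)) = (\<Sum>l\<in>I. if l = i then b l else 0) - (\<Sum>l\<in>I. if l = j then b l else 0)"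
      by (simp add: \<beta>_def scale_left_diff_distrib sum_subtractf if_distrib[of "\<lambda>c. scale c _"] cong: if_cong)
    also have "\<dots> = 0"
      using fin i j eq by (simp add: sum.delta')
    finally have "\<beta> i = 0"
      using i by (rule zero)
    with \<open>i \<noteq> j\<close> show False by (simp add: \<beta>_def)
  qed
  show "independent (b ` I)"
  proof (rule independent_if_scalars_zero)
    show "finite (b ` I)" using fin by simp
  next
    fix f v assume sum0: "(\<Sum>x\<in>b ` I. scale (f x) x) = 0" and "v \<in> b ` I"
    then obtain i where i: "i \<in> I" and v: "v = b i" by blast
    have "(\<Sum>j\<in>I. scale (f (b j)) (b j)) = 0"
      using sum0 by (simp add: sum.reindex[OF inj])
    then show "f v = 0"
      using zero[of "\<lambda>j. f (b j)" i] i v by simp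
  qed
qed

section \<open>Skew-Hamiltonian matrices with a cyclic pair\<close>

locale generic_skew_hamiltonian =
  fixes A :: "real^6^6"
  assumes skew_hamiltonian: "skew_hamiltonian A"
    and det_krylov: "det (krylov A) \<noteq> 0"
begin

abbreviation g :: "nat \<Rightarrow> nat \<Rightarrow> real" where
  "g \<equiv> rcoeff (esym3 A) (- esym2 A) (esym1 A)"

lemma krylov_inverse: "krylov A ** matrix_inv (krylov A) = mat 1" "matrix_inv (krylov A) ** krylov A = mat 1"
  using matrix_inv_mult det_krylov invertible_det_nz by blast+

definition coord :: "nat \<Rightarrow> nat \<Rightarrow> real^6 \<Rightarrow> real" where
  "coord p r u = (matrix_inv (krylov A) *v u) $ kidx p r"

lemma linear_coord: "linear (coord p r)"
  by (rule linearI) (simp_all add: coord_def matrix_vector_right_distrib matrix_vector_mult_scaleR)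

lemmas coord_add = linear_add[OF linear_coord]
lemmas coord_diff = linear_diff[OF linear_coord]
lemmas coord_scaleR = linear_scale[OF linear_coord]
lemmas coord_sum = linear_sum[OF linear_coord]

lemma coord_kvec:
  "p < 2 \<Longrightarrow> q < 2 \<Longrightarrow> r < 3 \<Longrightarrow> s < 3 \<Longrightarrow> coord q s (kvec A p r) = (if q = p \<and> s = r then 1 else 0)"
proof -
  assume a: "p < 2" "q < 2" "r < 3" "s < 3"
  have "kvec A p r = krylov A *v axis (kidx p r) 1"
    using column_krylov[OF a(1,3)] by (simp add: vec_eq_iff matrix_vector_mult_def column_def sum_axis)
  then have "matrix_inv (krylov A) *v kvec A p r = axis (kidx p r) 1"
    by (simp add: matrix_vector_mul_assoc krylov_inverse)
  then show ?thesis
    using kidx_eq_iff[OF a] by (simp add: coord_def axis_def)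
qed

lemma kvec_expand: "u = (\<Sum>p<2. \<Sum>r<3. coord p r u *\<^sub>R kvec A p r)"
proof -
  have "u = krylov A *v (matrix_inv (krylov A) *v u)"
    by (simp add: matrix_vector_mul_assoc krylov_inverse)
  also have "\<dots> = (\<Sum>j\<in>UNIV. (matrix_inv (krylov A) *v u) $ j *s column j (krylov A))"
    by (rule matrix_mult_sum)
  also have "\<dots> = (\<Sum>p<2. \<Sum>r<3. coord p r u *\<^sub>R kvec A p r)"
    by (simp add: sum_UNIV_kidx coord_def column_krylov scalar_mult_eq_scaleR)
  finally show ?thesis .
qed

lemma coord_vmul:
  assumes "q < 2"
  shows "coord q 0 (vmul A u) = esym3 A * coord q 2 u"
    and "coord q 1 (vmul A u) = coord q 0 u - esym2 A * coord q 2 u"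
    and "coord q 2 (vmul A u) = coord q 1 u + esym1 A * coord q 2 u"
proof -
  have "vmul A u = (\<Sum>p<2. \<Sum>r<3. coord p r u *\<^sub>R kvec A p (Suc r))"
    by (subst kvec_expand[of u]) (simp add: linear_sum[OF linear_vmul] linear_scale[OF linear_vmul] kvec_Suc)
  also have "\<dots> = (\<Sum>p<2. coord p 0 u *\<^sub>R kvec A p 1 + coord p 1 u *\<^sub>R kvec A p 2
      + coord p 2 u *\<^sub>R (esym3 A *\<^sub>R kvec A p 0 + (- esym2 A) *\<^sub>R kvec A p 1 + esym1 A *\<^sub>R kvec A p 2))"
    using kvec_add_three[OF skew_hamiltonian, of _ 0]
    by (simp add: sum_less_three numeral_3_eq_3 numeral_2_eq_2)
  finally have "vmul A u = \<dots>" .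
  then show "coord q 0 (vmul A u) = esym3 A * coord q 2 u"
    and "coord q 1 (vmul A u) = coord q 0 u - esym2 A * coord q 2 u"
    and "coord q 2 (vmul A u) = coord q 1 u + esym1 A * coord q 2 u"
    using less_two_cases[OF assms]
    by (auto simp: coord_sum coord_add coord_diff coord_scaleR coord_kvec sum_less_two)
qed

definition kform :: "nat \<Rightarrow> nat \<Rightarrow> nat \<Rightarrow> nat \<Rightarrow> real^6 \<Rightarrow> real^6 \<Rightarrow> real^6 \<Rightarrow> real" where
  "kform p q u n x y z =
     (\<Sum>r<3. \<Sum>s<3. \<Sum>t<3. g n (r + s + t) * coord p r x * coord q s y * coord u t z)"

lemma sum_rcoeff_coord_vmul:
  assumes "q < 2"
  shows "(\<Sum>r<3. g n (r + m) * coord q r (vmul A x)) = (\<Sum>r<3. g n (r + m + 1) * coord q r x)"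
proof -
  have idx: "1 + m = m + 1" "2 + m = m + 2" "m + 1 + 1 = m + 2" "m + 2 + 1 = m + 3" by simp_all
  have "(\<Sum>r<3. g n (r + m) * coord q r (vmul A x)) =
      g n m * coord q 0 (vmul A x) + g n (m + 1) * coord q 1 (vmul A x) + g n (m + 2) * coord q 2 (vmul A x)"
    by (simp only: sum_less_three add_0 idx)
  also have "\<dots> = g n m * (esym3 A * coord q 2 x) + g n (m + 1) * (coord q 0 x - esym2 A * coord q 2 x)
      + g n (m + 2) * (coord q 1 x + esym1 A * coord q 2 x)"
    by (simp only: coord_vmul[OF assms])
  also have "\<dots> = g n (m + 1) * coord q 0 x + g n (m + 2) * coord q 1 x + g n (m + 3) * coord q 2 x"
    by (simp only: rcoeff_add_three) (simp add: algebra_simps)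
  also have "\<dots> = (\<Sum>r<3. g n (r + m + 1) * coord q r x)"
    by (simp only: sum_less_three add_0 idx)
  finally show ?thesis .
qed

lemma kform_vmul:
  assumes "p < 2" "q < 2" "u < 2"
  shows "kform p q u n (vmul A x) y z = kform p q u n x (vmul A y) z"
    and "kform p q u n x (vmul A y) z = kform p q u n x y (vmul A z)"
proof -
  define K1 where "K1 x y z = (\<Sum>r<3. \<Sum>s<3. \<Sum>t<3. g n (r + s + t + 1) * coord p r x * coord q s y * coord u t z)"
    for x y z
  have 1: "kform p q u n (vmul A x) y z = K1 x y z" for x y z
    unfolding kform_def K1_def by (rule triple_sum_shift) (rule sum_rcoeff_coord_vmul[OF assms(1)])
  have 2: "kform p q u n x (vmul A y) z = K1 x y z" for x y z
    unfolding kform_def K1_def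
    by (subst (1 2) triple_sum_swap12) (rule triple_sum_shift, rule sum_rcoeff_coord_vmul[OF assms(2)])
  have 3: "kform p q u n x y (vmul A z) = K1 x y z" for x y z
    unfolding kform_def K1_def
    by (subst (1 2) triple_sum_swap23, subst (1 2) triple_sum_swap12)
      (rule triple_sum_shift, rule sum_rcoeff_coord_vmul[OF assms(3)])
  show "kform p q u n (vmul A x) y z = kform p q u n x (vmul A y) z"
    and "kform p q u n x (vmul A y) z = kform p q u n x y (vmul A z)"
    by (simp_all only: 1 2 3)
qed

lemma kform_swap:
  "kform p q u n x x x = kform q p u n x x x"
  "kform p q u n x x x = kform p u q n x x x"
  unfolding kform_def by (rule triple_sum_swap12, rule triple_sum_swap23)

definition ktensor :: "nat \<Rightarrow> nat \<Rightarrow> nat \<Rightarrow> nat \<Rightarrow> 6 \<Rightarrow> 6 \<Rightarrow> 6 \<Rightarrow> real" where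
  "ktensor p q u n i j k = (\<Sum>r<3. \<Sum>s<3. \<Sum>t<3.
     g n (r + s + t) * (axis (kidx p r) 1 $ i * axis (kidx q s) 1 $ j * axis (kidx u t) 1 $ k))"

lemma kform_eq_trilinear:
  "kform p q u n x y z =
     trilinear (ktensor p q u n) (matrix_inv (krylov A) *v x) (matrix_inv (krylov A) *v y) (matrix_inv (krylov A) *v z)"
  unfolding ktensor_def[abs_def]
  by (simp only: trilinear_tensor_sum trilinear_tensor_scale trilinear_axis_tensor)
    (simp add: kform_def coord_def mult.assoc)

lemma kform_is_trilinear:
  obtains c where "\<And>x y z. kform p q u n x y z = trilinear c x y z"
  using kform_eq_trilinear trilinear_change_basis by metis

text \<open>The twelve basic solutions; k counts how many of the three slots use the second block.\<close>

definition basic_solution :: "nat \<Rightarrow> nat \<Rightarrow> real^6 \<Rightarrow> real" where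
  "basic_solution k n x = kform (of_bool (3 \<le> k)) (of_bool (2 \<le> k)) (of_bool (1 \<le> k)) n x x x"

lemma kform_diagonal:
  "p < 2 \<Longrightarrow> q < 2 \<Longrightarrow> u < 2 \<Longrightarrow> kform p q u n x x x = basic_solution (p + q + u) n x"
  by (auto dest!: less_two_cases simp: basic_solution_def intro: kform_swap
      kform_swap(1)[THEN trans, OF kform_swap(2)] kform_swap(2)[THEN trans, OF kform_swap(1)])

lemma basic_solution_in_sol_space: "basic_solution k n \<in> sol_space A"
proof -
  let ?p = "of_bool (3 \<le> k) :: nat" and ?q = "of_bool (2 \<le> k) :: nat" and ?u = "of_bool (1 \<le> k) :: nat"
  obtain c where c: "\<And>x y z. kform ?p ?q ?u n x y z = trilinear c x y z"
    using kform_is_trilinear by blast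
  have lt: "?p < 2" "?q < 2" "?u < 2" by simp_all
  have "self_adjoint_for (symmetrize c) A"
    unfolding self_adjoint_for_def trilinear_symmetrize c[symmetric]
    \<comment> \<open>moving every vmul A into the third slot turns both sides into the same six terms\<close>
    by (simp only: kform_vmul[OF lt] add_ac simp_thms)
  moreover have "basic_solution k n = (\<lambda>x. trilinear c x x x)"
    unfolding basic_solution_def c ..
  ultimately show ?thesis
    unfolding sol_space_iff by blast
qed

lemma sum_axis_kidx:
  fixes f :: "nat \<Rightarrow> real"
  assumes "a < 2" "p < 2" "r < 3"
  shows "(\<Sum>r'<3. axis (kidx p r') 1 $ kidx a r * f r') = (if p = a then f r else 0)"
proof -
  have "axis (kidx p r') 1 $ kidx a r * f r' = (if r' = r then if p = a then f r else 0 else 0)"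
    if "r' < 3" for r'
    using kidx_eq_iff[OF assms(2,1) that assms(3)] by (auto simp: axis_def)
  then show ?thesis
    using assms(3) by (simp add: sum.delta)
qed

lemma ktensor_kidx:
  assumes "a < 2" "b < 2" "d < 2" "p < 2" "q < 2" "u < 2" "r < 3" "s < 3" "t < 3"
  shows "ktensor p q u n (kidx a r) (kidx b s) (kidx d t) =
    (if p = a \<and> q = b \<and> u = d then g n (r + s + t) else 0)"
proof -
  have "ktensor p q u n (kidx a r) (kidx b s) (kidx d t) =
      (\<Sum>r'<3. axis (kidx p r') 1 $ kidx a r * (\<Sum>s'<3. axis (kidx q s') 1 $ kidx b s *
        (\<Sum>t'<3. axis (kidx u t') 1 $ kidx d t * g n (r' + s' + t'))))"
    by (simp add: ktensor_def sum_distrib_left mult_ac)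
  then show ?thesis
    using assms by (simp add: sum_axis_kidx)
qed

definition seed_moment :: "(6 \<Rightarrow> 6 \<Rightarrow> 6 \<Rightarrow> real) \<Rightarrow> nat \<Rightarrow> nat \<Rightarrow> nat \<Rightarrow> nat \<Rightarrow> real" where
  "seed_moment c p q u m = trilinear (symmetrize c) (krylov_seed p) (krylov_seed q) (kvec A u m)"

lemma seed_moment_expand: "seed_moment c p q u m = (\<Sum>n<3. g n m * seed_moment c p q u n)"
proof (rule linear_recurrence_expand)
  show "seed_moment c p q u (m + 3) = esym3 A * seed_moment c p q u m + - esym2 A * seed_moment c p q u (m + 1)
      + esym1 A * seed_moment c p q u (m + 2)" for m
    by (simp add: seed_moment_def kvec_add_three[OF skew_hamiltonian] trilinear_add trilinear_diff trilinear_scaleR)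
qed

lemma trilinear_krylov_columns:
  assumes "self_adjoint_for (symmetrize c) A"
  shows "trilinear (symmetrize c) (column i (krylov A)) (column j (krylov A)) (column k (krylov A)) =
    (\<Sum>p<2. \<Sum>q<2. \<Sum>u<2. \<Sum>n<3. seed_moment c p q u n * ktensor p q u n i j k)"
proof -
  obtain a r where ar: "a < 2" "r < 3" "i = kidx a r" using kidx_surj by blast
  obtain b s where bs: "b < 2" "s < 3" "j = kidx b s" using kidx_surj by blast
  obtain d t where dt: "d < 2" "t < 3" "k = kidx d t" using kidx_surj by blast
  have "trilinear (symmetrize c) (column i (krylov A)) (column j (krylov A)) (column k (krylov A)) =
      seed_moment c a b d (r + s + t)"
    using ar bs dt self_adjoint_for_symmetrize_pow[OF assms]
    by (simp add: column_krylov seed_moment_def kvec_def)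
  also have "\<dots> = (\<Sum>n<3. g n (r + s + t) * seed_moment c a b d n)"
    by (rule seed_moment_expand)
  also have "\<dots> = (\<Sum>p<2. \<Sum>q<2. \<Sum>u<2. \<Sum>n<3. seed_moment c p q u n * ktensor p q u n i j k)"
    using ar bs dt by (auto dest!: less_two_cases simp: ktensor_kidx sum_less_two mult.commute)
  finally show ?thesis .
qed

lemma sol_space_expand:
  assumes "H \<in> sol_space A"
  shows "\<exists>F. H = (\<lambda>x. \<Sum>p<2. \<Sum>q<2. \<Sum>u<2. \<Sum>n<3. F p q u n * basic_solution (p + q + u) n x)"
proof -
  obtain c where H: "H = (\<lambda>x. trilinear c x x x)" and sa: "self_adjoint_for (symmetrize c) A"
    using assms unfolding sol_space_iff by blast
  have "H x = (\<Sum>p<2. \<Sum>q<2. \<Sum>u<2. \<Sum>n<3. seed_moment c p q u n / 6 * basic_solution (p + q + u) n x)"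
    for x
  proof -
    let ?y = "matrix_inv (krylov A) *v x"
    have "6 * H x = trilinear (symmetrize c) x x x"
      by (simp add: H trilinear_symmetrize)
    also have "\<dots> = trilinear (symmetrize c) (krylov A *v ?y) (krylov A *v ?y) (krylov A *v ?y)"
      by (simp add: matrix_vector_mul_assoc krylov_inverse)
    also have "\<dots> = (\<Sum>p<2. \<Sum>q<2. \<Sum>u<2. \<Sum>n<3. seed_moment c p q u n * trilinear (ktensor p q u n) ?y ?y ?y)"
      by (simp only: trilinear_change_basis trilinear_krylov_columns[OF sa] trilinear_tensor_sum
          trilinear_tensor_scale)
    also have "\<dots> = (\<Sum>p<2. \<Sum>q<2. \<Sum>u<2. \<Sum>n<3. seed_moment c p q u n * basic_solution (p + q + u) n x)"
      by (intro sum.cong refl) (simp add: kform_eq_trilinear[symmetric] kform_diagonal)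
    finally have "H x = (\<Sum>p<2. \<Sum>q<2. \<Sum>u<2. \<Sum>n<3. seed_moment c p q u n * basic_solution (p + q + u) n x) / 6"
      by simp
    then show ?thesis
      by (simp add: sum_divide_distrib)
  qed
  then show ?thesis
    by (intro exI[of _ "\<lambda>p q u n. seed_moment c p q u n / 6"]) (simp add: fun_eq_iff)
qed

lemma basic_solutions_independent:
  assumes zero: "\<And>x. (\<Sum>k<4. \<Sum>n<3. \<alpha> k n * basic_solution k n x) = 0"
    and "k0 < 4" "n0 < 3"
  shows "\<alpha> k0 n0 = 0"
proof -
  let ?T = "\<lambda>k n. ktensor (of_bool (3 \<le> k)) (of_bool (2 \<le> k)) (of_bool (1 \<le> k)) n"
  define S where "S i j l = (\<Sum>k<4. \<Sum>n<3. \<alpha> k n * ?T k n i j l)" for i j l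
  have "trilinear S y y y = (\<Sum>k<4. \<Sum>n<3. \<alpha> k n * basic_solution k n (krylov A *v y))" for y
    unfolding S_def
    by (simp only: trilinear_tensor_sum trilinear_tensor_scale)
      (simp add: basic_solution_def kform_eq_trilinear matrix_vector_mul_assoc krylov_inverse)
  then have "symmetrize S i j l = 0" for i j l
    using zero by (intro symmetrize_eq_0_if_cubic_form_eq_0) simp
  then have "(\<Sum>k<4. \<Sum>n<3. \<alpha> k n * symmetrize (?T k n) i j l) = 0" for i j l
    by (simp only: S_def[abs_def] symmetrize_sum symmetrize_scale)
  from this[of "kidx (of_bool (3 \<le> k0)) 0" "kidx (of_bool (2 \<le> k0)) 0" "kidx (of_bool (1 \<le> k0)) n0"]
  show ?thesis
    using assms(2) less_three_cases[OF assms(3)]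
    by (auto simp: symmetrize_def ktensor_kidx sum_less_four sum_less_three rcoeff_less_three
        dest!: less_four_cases)
qed

theorem fun_dim_sol_space: "fun_dim (sol_space A) = 12"
proof -
  interpret V: vector_space "\<lambda>(c::real) (f::real^6 \<Rightarrow> real) x. c * f x"
    by (rule vector_space_fun)
  define I where "I = {..<4::nat} \<times> {..<3::nat}"
  define b where "b = (\<lambda>(k, n). basic_solution k n)"
  have zero: "\<beta> i = 0" if "(\<Sum>j\<in>I. (\<lambda>x. \<beta> j * b j x)) = 0" and "i \<in> I" for \<beta> i
  proof -
    have "(\<Sum>k<4. \<Sum>n<3. \<beta> (k, n) * basic_solution k n x) = 0" for x
      using fun_cong[OF that(1), of x] by (simp add: sum_apply I_def b_def sum.cartesian_product split_def)
    then show ?thesis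
      using basic_solutions_independent[where \<alpha> = "\<lambda>k n. \<beta> (k, n)"] that(2) by (auto simp: I_def)
  qed
  have fin: "finite I" by (simp add: I_def)
  have indep: "inj_on b I" "V.independent (b ` I)"
    by (rule V.independent_image_if_scalars_zero[OF fin], rule zero, assumption+)+
  have sub: "b ` I \<subseteq> sol_space A"
    by (auto simp: b_def basic_solution_in_sol_space)
  have span: "sol_space A \<subseteq> V.span (b ` I)"
  proof
    fix H assume "H \<in> sol_space A"
    then obtain F where H: "H = (\<lambda>x. \<Sum>p<2. \<Sum>q<2. \<Sum>u<2. \<Sum>n<3. F p q u n * basic_solution (p + q + u) n x)"
      using sol_space_expand by blast
    have "basic_solution (p + q + u) n \<in> b ` I" if "p < 2" "q < 2" "u < 2" "n < 3" for p q u n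
      using that by (auto simp: b_def I_def intro!: image_eqI[where x = "(p + q + u, n)"])
    then have "(\<Sum>p<2. \<Sum>q<2. \<Sum>u<2. \<Sum>n<3. (\<lambda>x. F p q u n * basic_solution (p + q + u) n x)) \<in> V.span (b ` I)"
      by (intro V.span_sum V.span_scale[where x = "basic_solution _ _", OF V.span_base]) auto
    moreover have "H = (\<Sum>p<2. \<Sum>q<2. \<Sum>u<2. \<Sum>n<3. (\<lambda>x. F p q u n * basic_solution (p + q + u) n x))"
      by (simp add: H sum_apply fun_eq_iff)
    ultimately show "H \<in> V.span (b ` I)"
      by simp
  qed
  have card: "card (b ` I) = 12"
    using card_image[OF indep(1)] by (simp add: I_def)
  show ?thesis
    unfolding fun_dim_def by (rule V.dim_unique[OF sub span indep(2) card])
qed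

end

section \<open>Genericity\<close>

lemma matrix_poly_sum: "(\<And>x. x \<in> S \<Longrightarrow> matrix_poly (f x)) \<Longrightarrow> matrix_poly (\<lambda>A. \<Sum>x\<in>S. f x A)"
proof (induct S rule: infinite_finite_induct)
  case (insert x F)
  then show ?case
    using matrix_poly.add[of "f x" "\<lambda>A. \<Sum>x\<in>F. f x A"] by simp
qed (simp_all add: matrix_poly.const)

lemma matrix_poly_prod: "(\<And>x. x \<in> S \<Longrightarrow> matrix_poly (f x)) \<Longrightarrow> matrix_poly (\<lambda>A. \<Prod>x\<in>S. f x A)"
proof (induct S rule: infinite_finite_induct)
  case (insert x F)
  then show ?case
    using matrix_poly.mult[of "f x" "\<lambda>A. \<Prod>x\<in>F. f x A"] by simp
qed (simp_all add: matrix_poly.const)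

lemma matrix_poly_kvec: "matrix_poly (\<lambda>A. kvec A p m $ i)"
proof (induct m arbitrary: i)
  case 0
  show ?case by (simp add: kvec_def matrix_poly.const)
next
  case (Suc m)
  have "matrix_poly (\<lambda>A. \<Sum>j\<in>UNIV. A $ j $ i * kvec A p m $ j)"
    by (intro matrix_poly_sum matrix_poly.mult matrix_poly.entry Suc)
  then show ?case
    by (simp add: kvec_Suc vmul_nth)
qed

lemma matrix_poly_det_krylov: "matrix_poly (\<lambda>A. det (krylov A))"
  unfolding det_def krylov_def
  by (intro matrix_poly_sum matrix_poly.mult matrix_poly.const matrix_poly_prod)
    (simp add: matrix_poly_kvec)

text \<open>A0 = diag(T, T) with T the adjacency matrix of the path 0 - 1 - 2; e_0 is a cyclic vector of T.\<close>

definition A0 :: "real^6^6" where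
  "A0 = (\<chi> i j. if (idx i, idx j) \<in> {(0,1),(1,0),(1,2),(2,1),(3,4),(4,3),(4,5),(5,4)} then 1 else 0)"

lemma skew_hamiltonian_A0: "skew_hamiltonian A0"
  unfolding skew_hamiltonian_def vec_eq_iff all_six
  by (simp add: matrix_matrix_mult_def transpose_def Jmat_nth sum_UNIV_six A0_def)

lemma det_krylov_A0: "det (krylov A0) \<noteq> 0"
proof -
  define K where "K = (\<chi> i j. if idx i = idx j \<or> (idx i, idx j) \<in> {(0,2),(3,5)} then 1 else (0::real))"
  define N where "N = (\<chi> i j. if idx i = idx j then 1 else if (idx i, idx j) \<in> {(0,2),(3,5)} then -1 else (0::real))"
  have "vmul A0 u = (\<chi> l. if l = 0 then u$1 else if l = 1 then u$0 + u$2 else if l = 2 then u$1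
      else if l = 3 then u$4 else if l = 4 then u$3 + u$5 else u$4)" for u
    unfolding vec_eq_iff all_six by (simp add: vmul_nth sum_UNIV_six A0_def)
  then have "krylov A0 = K"
    unfolding vec_eq_iff all_six
    by (simp add: krylov_def K_def kvec_def krylov_seed_def numeral_2_eq_2 axis_def)
  moreover have "N ** K = mat 1"
    unfolding vec_eq_iff all_six
    by (simp add: matrix_matrix_mult_def sum_UNIV_six N_def K_def mat_def)
  ultimately show ?thesis
    using invertible_left_inverse invertible_det_nz by metis
qed

theorem mainTheorem2:
  shows "\<exists>p. matrix_poly p \<and> (\<exists>A. skew_hamiltonian A \<and> p A \<noteq> 0) \<and>
           (\<forall>A. skew_hamiltonian A \<and> p A \<noteq> 0 \<longrightarrow> fun_dim (sol_space A) = 12)"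
proof (intro exI[of _ "\<lambda>A. det (krylov A)"] conjI allI impI)
  show "matrix_poly (\<lambda>A. det (krylov A))"
    by (rule matrix_poly_det_krylov)
  show "\<exists>A. skew_hamiltonian A \<and> det (krylov A) \<noteq> 0"
    using skew_hamiltonian_A0 det_krylov_A0 by blast
  fix A assume "skew_hamiltonian A \<and> det (krylov A) \<noteq> 0"
  then interpret generic_skew_hamiltonian A
    by unfold_locales auto
  show "fun_dim (sol_space A) = 12"
    by (rule fun_dim_sol_space)
qed

end
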